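(* Let $G$ be a finitely generated group satisfying the Morse local-to-global property. Then the Morse boundary $\partial_* G$ is strongly $\sigma$-compact.
   Context: A Morse gauge is a non-decreasing continuous function $M:\mathbb{R}_{\geq 1}\to\mathbb{R}_{\geq 0}$. A continuous map $\gamma:I\to X$ is a $Q$--quasi-geodesic ($Q\ge 1$) if $|t-s|/Q-Q\le d(\gamma(s),\gamma(t))\le Q|t-s|+Q$ for all $s,t\in I$. A quasi-geodesic $\gamma$ is $M$--Morse if every $Q$--quasi-geodesic with endpoints $\gamma(s),\gamma(t)$ lies in the closed $M(Q)$--neighbourhood of $\gamma[s,t]$; it is Morse if it is $M$--Morse for some Morse gauge $M$. For a proper geodesic metric space $X$ with basepoint $x_0$, the Morse boundary $\partial_*X$ is the set of Morse geodesic rays (based at $x_0$) up to bounded Hausdorff distance, with the topology of Cordes; for a Morse gauge $M$, the $M$--stratum $\partial^M_{x_0}X$ is the subset of classes represented by $M$--Morse geodesic rays starting at $x_0$. For a finitely generated group $G$, $\partial_*G$ is the Morse boundary of a Cayley graph (a quasi-isometry invariant). $\partial_*X$ is strongly $\sigma$-compact if there is an increasing sequence of Morse gauges $(M_n)_{n\in\mathbb{N}}$ with $\partial_*X=\bigcup_n\partial^{M_n}_{x_0}X$ and such that for every Morse gauge $M$ there is $n$ with $\partial^{M}_{x_0}X\subset\partial^{M_n}_{x_0}X$. A path $p:I\to X$ is $L$--locally an $M$--Morse $Q$--quasi-geodesic if for all $s,t\in I$ with $|t-s|\le L$ the subpath $p[s,t]$ is an $M$--Morse $Q$--quasi-geodesic.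 A space $X$ has the Morse local-to-global (MLTG) property if for every $Q\ge1$ and Morse gauge $M$ there exist a scale $L$, a constant $Q'\ge 1$ and a Morse gauge $M'$ such that every path that is $L$--locally an $M$--Morse $Q$--quasi-geodesic is an $M'$--Morse $Q'$--quasi-geodesic. A finitely generated group has the MLTG property if its Cayley graph with respect to a finite generating set does. *)

theory Defs
  imports "HOL-Analysis.Analysis" "HOL-Algebra.Generated_Groups"
begin

definition morse_gauge :: "(real \<Rightarrow> real) \<Rightarrow> bool" where
  "morse_gauge M \<longleftrightarrow> mono_on {1..} M \<and> continuous_on {1..} M \<and> (\<forall>q\<ge>1. M q \<ge> 0)"

definition mpath :: "'p set \<Rightarrow> ('p \<Rightarrow> 'p \<Rightarrow> real) \<Rightarrow> (real \<Rightarrow> 'p) \<Rightarrow> real set \<Rightarrow> bool" where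
  "mpath X d p I \<longleftrightarrow> is_interval I \<and> I \<noteq> {} \<and> p ` I \<subseteq> X \<and>
     (\<forall>t\<in>I. \<forall>e>0. \<exists>\<delta>>0. \<forall>s\<in>I. \<bar>s - t\<bar> < \<delta> \<longrightarrow> d (p s) (p t) < e)"

definition quasi_geodesic :: "'p set \<Rightarrow> ('p \<Rightarrow> 'p \<Rightarrow> real) \<Rightarrow> real \<Rightarrow> (real \<Rightarrow> 'p) \<Rightarrow> real set \<Rightarrow> bool" where
  "quasi_geodesic X d Q p I \<longleftrightarrow> Q \<ge> 1 \<and> mpath X d p I \<and>
     (\<forall>s\<in>I. \<forall>t\<in>I. \<bar>t - s\<bar> / Q - Q \<le> d (p s) (p t) \<and> d (p s) (p t) \<le> Q * \<bar>t - s\<bar> + Q)"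

definition cl_nbhd :: "('p \<Rightarrow> 'p \<Rightarrow> real) \<Rightarrow> 'p set \<Rightarrow> real \<Rightarrow> 'p set" where
  "cl_nbhd d A r = {x. A \<noteq> {} \<and> Inf ((\<lambda>y. d x y) ` A) \<le> r}"

definition is_morse :: "'p set \<Rightarrow> ('p \<Rightarrow> 'p \<Rightarrow> real) \<Rightarrow> (real \<Rightarrow> real) \<Rightarrow> (real \<Rightarrow> 'p) \<Rightarrow> real set \<Rightarrow> bool" where
  "is_morse X d M p I \<longleftrightarrow> (\<exists>Q0. quasi_geodesic X d Q0 p I) \<and>
     (\<forall>Q\<ge>1. \<forall>s\<in>I. \<forall>t\<in>I. s \<le> t \<longrightarrow>
        (\<forall>\<beta> a b. a \<le> b \<and> quasi_geodesic X d Q \<beta> {a..b} \<and> \<beta> a = p s \<and> \<beta> b = p t \<longrightarrow>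
           \<beta> ` {a..b} \<subseteq> cl_nbhd d (p ` {s..t}) (M Q)))"

definition geodesic_ray :: "'p set \<Rightarrow> ('p \<Rightarrow> 'p \<Rightarrow> real) \<Rightarrow> 'p \<Rightarrow> (real \<Rightarrow> 'p) \<Rightarrow> bool" where
  "geodesic_ray X d x0 \<gamma> \<longleftrightarrow> \<gamma> 0 = x0 \<and> \<gamma> ` {0..} \<subseteq> X \<and>
     (\<forall>s\<ge>0. \<forall>t\<ge>0. d (\<gamma> s) (\<gamma> t) = \<bar>s - t\<bar>)"

definition morse_ray :: "'p set \<Rightarrow> ('p \<Rightarrow> 'p \<Rightarrow> real) \<Rightarrow> 'p \<Rightarrow> (real \<Rightarrow> 'p) \<Rightarrow> bool" where
  "morse_ray X d x0 \<gamma> \<longleftrightarrow> geodesic_ray X d x0 \<gamma> \<and> (\<exists>M. morse_gauge M \<and> is_morse X d M \<gamma> {0..})"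

definition hausdorff_close :: "('p \<Rightarrow> 'p \<Rightarrow> real) \<Rightarrow> (real \<Rightarrow> 'p) \<Rightarrow> (real \<Rightarrow> 'p) \<Rightarrow> bool" where
  "hausdorff_close d \<gamma> \<eta> \<longleftrightarrow> (\<exists>C. (\<forall>s\<ge>0. \<exists>t\<ge>0. d (\<gamma> s) (\<eta> t) \<le> C) \<and> (\<forall>t\<ge>0. \<exists>s\<ge>0. d (\<gamma> s) (\<eta> t) \<le> C))"

definition ray_class :: "'p set \<Rightarrow> ('p \<Rightarrow> 'p \<Rightarrow> real) \<Rightarrow> 'p \<Rightarrow> (real \<Rightarrow> 'p) \<Rightarrow> (real \<Rightarrow> 'p) set" where
  "ray_class X d x0 \<gamma> = {\<eta>. morse_ray X d x0 \<eta> \<and> hausdorff_close d \<gamma> \<eta>}"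

definition morse_boundary :: "'p set \<Rightarrow> ('p \<Rightarrow> 'p \<Rightarrow> real) \<Rightarrow> 'p \<Rightarrow> (real \<Rightarrow> 'p) set set" where
  "morse_boundary X d x0 = ray_class X d x0 ` {\<gamma>. morse_ray X d x0 \<gamma>}"

definition morse_stratum :: "'p set \<Rightarrow> ('p \<Rightarrow> 'p \<Rightarrow> real) \<Rightarrow> 'p \<Rightarrow> (real \<Rightarrow> real) \<Rightarrow> (real \<Rightarrow> 'p) set set" where
  "morse_stratum X d x0 M = ray_class X d x0 ` {\<gamma>. geodesic_ray X d x0 \<gamma> \<and> is_morse X d M \<gamma> {0..}}"

definition strongly_sigma_compact :: "'p set \<Rightarrow> ('p \<Rightarrow> 'p \<Rightarrow> real) \<Rightarrow> 'p \<Rightarrow> bool" where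
  "strongly_sigma_compact X d x0 \<longleftrightarrow> (\<exists>Ms :: nat \<Rightarrow> real \<Rightarrow> real.
     (\<forall>n. morse_gauge (Ms n)) \<and> (\<forall>n. \<forall>q\<ge>1. Ms n q \<le> Ms (Suc n) q) \<and>
     morse_boundary X d x0 = (\<Union>n. morse_stratum X d x0 (Ms n)) \<and>
     (\<forall>M. morse_gauge M \<longrightarrow> (\<exists>n. morse_stratum X d x0 M \<subseteq> morse_stratum X d x0 (Ms n))))"

definition locally_morse_qg :: "'p set \<Rightarrow> ('p \<Rightarrow> 'p \<Rightarrow> real) \<Rightarrow> real \<Rightarrow> (real \<Rightarrow> real) \<Rightarrow> real \<Rightarrow> (real \<Rightarrow> 'p) \<Rightarrow> real set \<Rightarrow> bool" where
  "locally_morse_qg X d L M Q p I \<longleftrightarrow> mpath X d p I \<and>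
     (\<forall>s\<in>I. \<forall>t\<in>I. s \<le> t \<and> t - s \<le> L \<longrightarrow> quasi_geodesic X d Q p {s..t} \<and> is_morse X d M p {s..t})"

definition MLTG :: "'p set \<Rightarrow> ('p \<Rightarrow> 'p \<Rightarrow> real) \<Rightarrow> bool" where
  "MLTG X d \<longleftrightarrow> (\<forall>Q\<ge>1. \<forall>M. morse_gauge M \<longrightarrow> (\<exists>L Q' M'. Q' \<ge> 1 \<and> morse_gauge M' \<and>
     (\<forall>p I. locally_morse_qg X d L M Q p I \<longrightarrow> quasi_geodesic X d Q' p I \<and> is_morse X d M' p I)))"

definition cay_adj :: "('a, 'b) monoid_scheme \<Rightarrow> 'a set \<Rightarrow> ('a \<times> 'a) set" where
  "cay_adj G S = {(g, h). g \<in> carrier G \<and> h \<in> carrier G \<and> g \<noteq> h \<and>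
      (\<exists>s\<in>S. h = g \<otimes>\<^bsub>G\<^esub> s \<or> g = h \<otimes>\<^bsub>G\<^esub> s)}"

definition cay_vdist :: "('a, 'b) monoid_scheme \<Rightarrow> 'a set \<Rightarrow> 'a \<Rightarrow> 'a \<Rightarrow> real" where
  "cay_vdist G S g h = real (LEAST n. (g, h) \<in> (cay_adj G S) ^^ n)"

text \<open>Points of the geometric realisation: a vertex g is {(g,0)}; the point on the edge
  {g,h} at distance t from g (0<t<1) is {(g,t),(h,1-t)}: each point records its
  distances to the endpoints of the (closed) cell containing it.\<close>
definition cay_points :: "('a, 'b) monoid_scheme \<Rightarrow> 'a set \<Rightarrow> ('a \<times> real) set set" where
  "cay_points G S = {{(g, 0)} | g. g \<in> carrier G} \<union>
     {{(g, t), (h, 1 - t)} | g h t. (g, h) \<in> cay_adj G S \<and> 0 < t \<and> t < 1}"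

text \<open>Path metric of the metric graph with unit-length edges.\<close>
definition cay_dist :: "('a, 'b) monoid_scheme \<Rightarrow> 'a set \<Rightarrow> ('a \<times> real) set \<Rightarrow> ('a \<times> real) set \<Rightarrow> real" where
  "cay_dist G S P P' = Inf
     ({ta + cay_vdist G S a b + tb | a ta b tb. (a, ta) \<in> P \<and> (b, tb) \<in> P'} \<union>
      {\<bar>t - u\<bar> | g h t u. g \<noteq> h \<and> P = {(g, t), (h, 1 - t)} \<and> P' = {(g, u), (h, 1 - u)}})"

definition cay_base :: "('a, 'b) monoid_scheme \<Rightarrow> ('a \<times> real) set" where
  "cay_base G = {(\<one>\<^bsub>G\<^esub>, 0)}"

end

theory Submission
  imports Defs
begin

text \<open>
  Fix a Morse gauge \<open>M\<close>. The Morse local-to-global property with \<open>Q = 1\<close> provides a scale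
  \<open>L\<close> and a gauge \<open>M'\<close> such that every geodesic ray which is \<open>L\<close>-locally \<open>M\<close>-Morse is
  \<open>M'\<close>-Morse. A geodesic ray from the identity is a path in the Cayley graph, so its
  restriction to \<open>[n, n + N]\<close> is encoded by the word of the \<open>N\<close> generators it traverses, and
  two rays with the same word on such windows differ there by a left translation, an isometry.
  Hence any \<open>M\<close>-Morse ray is \<open>L\<close>-locally \<open>M\<^sub>0\<close>-Morse as soon as every length-\<open>N\<close> word of an
  \<open>M\<close>-Morse ray (\<open>N \<ge> L + 1\<close>) also occurs in an \<open>M\<^sub>0\<close>-Morse ray. As the generating set is
  finite, the pairs formed by \<open>N\<close> and this set of words range over a countable set, so countably
  many gauges \<open>M'\<close> dominate all strata; their running maxima form the required sequence.
\<close>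

section \<open>Morse gauges and strata\<close>

lemma morse_gauge_zero: "morse_gauge (\<lambda>q. 0)"
  unfolding morse_gauge_def mono_on_def by auto

lemma morse_gauge_max:
  assumes "morse_gauge f" and "morse_gauge g"
  shows "morse_gauge (\<lambda>q. max (f q) (g q))"
proof -
  have "mono_on {1..} (\<lambda>q. max (f q) (g q))"
    using assms unfolding morse_gauge_def mono_on_def by (meson max.mono)
  moreover have "continuous_on {1..} (\<lambda>q. max (f q) (g q))"
    using assms unfolding morse_gauge_def by (intro continuous_on_max) auto
  ultimately show ?thesis
    using assms unfolding morse_gauge_def by (auto simp: le_max_iff_disj)
qed

lemma is_morse_mono_gauge:
  assumes "is_morse X d M p I" and "\<And>q. q \<ge> 1 \<Longrightarrow> M q \<le> M' q"
  shows "is_morse X d M' p I"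
proof -
  have "cl_nbhd d A (M q) \<subseteq> cl_nbhd d A (M' q)" if "q \<ge> 1" for A q
    using assms(2)[OF that] unfolding cl_nbhd_def by force
  then show ?thesis using assms(1) unfolding is_morse_def by (meson order_trans)
qed

lemma morse_stratum_mono:
  assumes "\<And>q. q \<ge> 1 \<Longrightarrow> M q \<le> M' q"
  shows "morse_stratum X d x0 M \<subseteq> morse_stratum X d x0 M'"
  unfolding morse_stratum_def using is_morse_mono_gauge[of X d M _ _ M'] assms by blast

lemma morse_boundary_eq_Union_strata:
  "morse_boundary X d x0 = (\<Union>M\<in>{M. morse_gauge M}. morse_stratum X d x0 M)"
  unfolding morse_boundary_def morse_stratum_def morse_ray_def by blast

lemma strongly_sigma_compactI:
  fixes K :: "nat \<Rightarrow> real \<Rightarrow> real"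
  assumes gauges: "\<And>k. morse_gauge (K k)"
    and cofinal: "\<And>M. morse_gauge M \<Longrightarrow> \<exists>k. morse_stratum X d x0 M \<subseteq> morse_stratum X d x0 (K k)"
  shows "strongly_sigma_compact X d x0"
proof -
  define Ms where "Ms = rec_nat (K 0) (\<lambda>n f q. max (f q) (K (Suc n) q))"
  have Ms_0: "Ms 0 = K 0" and Ms_Suc: "Ms (Suc n) = (\<lambda>q. max (Ms n q) (K (Suc n) q))" for n
    unfolding Ms_def by simp_all
  have gauge_Ms: "morse_gauge (Ms n)" for n
    by (induction n) (simp_all add: Ms_0 Ms_Suc gauges morse_gauge_max)
  have "K k q \<le> Ms k q" for k q
    by (cases k) (simp_all add: Ms_0 Ms_Suc)
  then have "morse_stratum X d x0 (K k) \<subseteq> morse_stratum X d x0 (Ms k)" for k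
    by (rule morse_stratum_mono)
  then have cofinal_Ms: "\<exists>n. morse_stratum X d x0 M \<subseteq> morse_stratum X d x0 (Ms n)"
    if "morse_gauge M" for M
    using cofinal[OF that] by blast
  have "morse_boundary X d x0 = (\<Union>n. morse_stratum X d x0 (Ms n))"
    unfolding morse_boundary_eq_Union_strata using gauge_Ms cofinal_Ms by blast
  then show ?thesis
    unfolding strongly_sigma_compact_def using gauge_Ms cofinal_Ms
    by (intro exI[of _ Ms]) (auto simp: Ms_Suc)
qed

lemma countable_image_representatives:
  assumes "countable (f ` A)" and "A \<noteq> {}"
  shows "\<exists>r :: nat \<Rightarrow> 'a. (\<forall>k. r k \<in> A) \<and> (\<forall>x\<in>A. \<exists>k. f (r k) = f x)"
proof -
  define r where "r k = inv_into A f (from_nat_into (f ` A) k)" for k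
  have onto: "from_nat_into (f ` A) k \<in> f ` A" for k
    using assms(2) by (simp add: from_nat_into)
  have "r k \<in> A" for k
    unfolding r_def using onto by (rule inv_into_into)
  moreover have "f (r k) = from_nat_into (f ` A) k" for k
    unfolding r_def using onto by (rule f_inv_into_f)
  ultimately show ?thesis
    using from_nat_into_surj[OF assms(1)] by (metis imageI)
qed

lemma strongly_sigma_compact_if_countable_types:
  assumes types: "countable (\<tau> ` {M. morse_gauge M})"
    and gauges: "\<And>M. morse_gauge M \<Longrightarrow> morse_gauge (F M)"
    and dominated: "\<And>M M0. morse_gauge M \<Longrightarrow> morse_gauge M0 \<Longrightarrow> \<tau> M = \<tau> M0 \<Longrightarrow>
      morse_stratum X d x0 M \<subseteq> morse_stratum X d x0 (F M0)"
  shows "strongly_sigma_compact X d x0"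
proof -
  have "{M. morse_gauge M} \<noteq> {}" using morse_gauge_zero by (metis empty_iff mem_Collect_eq)
  with types obtain r :: "nat \<Rightarrow> real \<Rightarrow> real" where r: "\<forall>k. r k \<in> {M. morse_gauge M}"
    and represent: "\<forall>M\<in>{M. morse_gauge M}. \<exists>k. \<tau> (r k) = \<tau> M"
    by (blast dest: countable_image_representatives)
  show ?thesis
  proof (rule strongly_sigma_compactI[where K = "\<lambda>k. F (r k)"])
    show "morse_gauge (F (r k))" for k using gauges r by blast
  next
    fix M assume "morse_gauge M"
    then show "\<exists>k. morse_stratum X d x0 M \<subseteq> morse_stratum X d x0 (F (r k))"
      using represent r dominated by (metis mem_Collect_eq)
  qed
qed

lemma countable_length_indexed_word_sets:
  assumes "finite T"
  shows "countable {(N, W) | N W. W \<subseteq> {xs. set xs \<subseteq> T \<and> length xs = N}}"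
proof -
  have "countable (SIGMA N:UNIV. Pow {xs. set xs \<subseteq> T \<and> length xs = N})"
    using finite_lists_length_eq[OF assms] by (simp add: countable_finite)
  then show ?thesis by (rule countable_subset[rotated]) auto
qed

section \<open>Quasi-geodesics and the Morse property\<close>

lemma is_morse_subinterval:
  assumes "is_morse X d M p I" and "J \<subseteq> I" and "quasi_geodesic X d Q p J"
  shows "is_morse X d M p J"
  using assms unfolding is_morse_def by blast

lemma geodesic_ray_quasi_geodesic:
  assumes ray: "geodesic_ray X d x0 \<gamma>" and J: "J \<subseteq> {0..}" "is_interval J" "J \<noteq> {}"
  shows "quasi_geodesic X d 1 \<gamma> J"
proof -
  have dist: "d (\<gamma> s) (\<gamma> t) = \<bar>s - t\<bar>" if "s \<in> J" "t \<in> J" for s t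
    using ray J that unfolding geodesic_ray_def by auto
  have "mpath X d \<gamma> J"
    using ray J dist unfolding geodesic_ray_def mpath_def by (auto simp: subset_eq)
  then show ?thesis unfolding quasi_geodesic_def using dist by (auto simp: abs_minus_commute)
qed

lemma quasi_geodesic_isometry:
  assumes "f ` X \<subseteq> X" and "\<And>y z. y \<in> X \<Longrightarrow> z \<in> X \<Longrightarrow> d (f y) (f z) = d y z"
    and "quasi_geodesic X d Q \<beta> I"
  shows "quasi_geodesic X d Q (f \<circ> \<beta>) I"
proof -
  have "\<beta> ` I \<subseteq> X" using assms(3) unfolding quasi_geodesic_def mpath_def by blast
  then show ?thesis using assms unfolding quasi_geodesic_def mpath_def by (auto simp: subset_eq)
qed

lemma cl_nbhd_isometry:
  assumes "\<And>y z. y \<in> X \<Longrightarrow> z \<in> X \<Longrightarrow> d (f y) (f z) = d y z" and "A \<subseteq> X" and "z \<in> X"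
  shows "f z \<in> cl_nbhd d (f ` A) r \<longleftrightarrow> z \<in> cl_nbhd d A r"
proof -
  have "(\<lambda>y. d (f z) y) ` f ` A = (\<lambda>y. d z y) ` A"
    unfolding image_image using assms by (auto intro!: image_cong)
  then show ?thesis unfolding cl_nbhd_def by simp
qed

lemma is_morse_isometric_shift:
  assumes morse: "is_morse X d M p {a + c..b + c}" and p: "p ` {a + c..b + c} \<subseteq> X"
    and \<phi>: "\<phi> ` X \<subseteq> X" "\<And>y z. y \<in> X \<Longrightarrow> z \<in> X \<Longrightarrow> d (\<phi> y) (\<phi> z) = d y z"
    and \<psi>: "\<psi> ` X \<subseteq> X" "\<And>y z. y \<in> X \<Longrightarrow> z \<in> X \<Longrightarrow> d (\<psi> y) (\<psi> z) = d y z"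
    and inverse: "\<And>y. y \<in> X \<Longrightarrow> \<psi> (\<phi> y) = y" "\<And>y. y \<in> X \<Longrightarrow> \<phi> (\<psi> y) = y"
    and p': "\<And>u. u \<in> {a..b} \<Longrightarrow> p' u = \<phi> (p (u + c))"
    and qg: "quasi_geodesic X d Q p' {a..b}"
  shows "is_morse X d M p' {a..b}"
  unfolding is_morse_def
proof (intro conjI allI impI ballI)
  show "\<exists>Q0. quasi_geodesic X d Q0 p' {a..b}" using qg by blast
next
  fix Q1 s t \<beta> \<alpha> \<omega>
  assume Q1: "1 \<le> Q1" and s: "s \<in> {a..b}" and t: "t \<in> {a..b}" and "s \<le> t"
    and \<beta>: "\<alpha> \<le> \<omega> \<and> quasi_geodesic X d Q1 \<beta> {\<alpha>..\<omega>} \<and> \<beta> \<alpha> = p' s \<and> \<beta> \<omega> = p' t"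
  have \<beta>X: "\<beta> ` {\<alpha>..\<omega>} \<subseteq> X" using \<beta> unfolding quasi_geodesic_def mpath_def by blast
  have "quasi_geodesic X d Q1 (\<psi> \<circ> \<beta>) {\<alpha>..\<omega>}" using quasi_geodesic_isometry[of \<psi> X d] \<psi> \<beta> by blast
  moreover have "(\<psi> \<circ> \<beta>) \<alpha> = p (s + c)" "(\<psi> \<circ> \<beta>) \<omega> = p (t + c)"
    using \<beta> p' s t p inverse(1) by (auto simp: image_subset_iff)
  moreover have "s + c \<in> {a + c..b + c}" "t + c \<in> {a + c..b + c}" "s + c \<le> t + c"
    using s t \<open>s \<le> t\<close> by auto
  ultimately have near: "(\<psi> \<circ> \<beta>) ` {\<alpha>..\<omega>} \<subseteq> cl_nbhd d (p ` {s + c..t + c}) (M Q1)"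
    using morse Q1 \<beta> unfolding is_morse_def by blast
  have "p' ` {s..t} = (\<lambda>u. \<phi> (p (u + c))) ` {s..t}"
    using s t p' by (intro image_cong) auto
  also have "\<dots> = \<phi> ` p ` (\<lambda>u. u + c) ` {s..t}"
    by (simp only: image_image)
  finally have image: "p' ` {s..t} = \<phi> ` p ` {s + c..t + c}" by simp
  have segment: "p ` {s + c..t + c} \<subseteq> X" using p s t by auto
  show "\<beta> ` {\<alpha>..\<omega>} \<subseteq> cl_nbhd d (p' ` {s..t}) (M Q1)"
  proof
    fix z assume z: "z \<in> \<beta> ` {\<alpha>..\<omega>}"
    then have "\<psi> z \<in> cl_nbhd d (p ` {s + c..t + c}) (M Q1)" using near by auto
    then have "\<phi> (\<psi> z) \<in> cl_nbhd d (\<phi> ` p ` {s + c..t + c}) (M Q1)"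
      using cl_nbhd_isometry[where X = X and d = d and f = \<phi>, OF \<phi>(2) segment] \<psi>(1) z \<beta>X by blast
    then show "z \<in> cl_nbhd d (p' ` {s..t}) (M Q1)" using image inverse(2) z \<beta>X by auto
  qed
qed

lemma MLTG_geodesic_scale_gauge:
  assumes "MLTG X d"
  obtains L M' where "\<And>M. morse_gauge M \<Longrightarrow> morse_gauge (M' M)"
    and "\<And>M p I. morse_gauge M \<Longrightarrow> locally_morse_qg X d (L M) M 1 p I \<Longrightarrow> is_morse X d (M' M) p I"
proof -
  have "\<forall>M. \<exists>L M'. morse_gauge M \<longrightarrow> morse_gauge M' \<and>
      (\<forall>p I. locally_morse_qg X d L M 1 p I \<longrightarrow> is_morse X d M' p I)"
    using assms unfolding MLTG_def by (meson order_refl)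
  then obtain L M' where "\<forall>M. morse_gauge M \<longrightarrow> morse_gauge (M' M) \<and>
      (\<forall>p I. locally_morse_qg X d (L M) M 1 p I \<longrightarrow> is_morse X d (M' M) p I)"
    by metis
  then show thesis using that by blast
qed

section \<open>The Cayley graph\<close>

definition cay_vertex :: "'a \<Rightarrow> ('a \<times> real) set" where
  "cay_vertex g = {(g, 0)}"

definition cay_edge_point :: "'a \<Rightarrow> 'a \<Rightarrow> real \<Rightarrow> ('a \<times> real) set" where
  "cay_edge_point g h t = {(g, t), (h, 1 - t)}"

definition cay_translate :: "('a, 'b) monoid_scheme \<Rightarrow> 'a \<Rightarrow> ('a \<times> real) set \<Rightarrow> ('a \<times> real) set" where
  "cay_translate G x P = (\<lambda>(g, t). (x \<otimes>\<^bsub>G\<^esub> g, t)) ` P"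

definition cay_dist_candidates ::
    "('a, 'b) monoid_scheme \<Rightarrow> 'a set \<Rightarrow> ('a \<times> real) set \<Rightarrow> ('a \<times> real) set \<Rightarrow> real set" where
  "cay_dist_candidates G S P P' =
     {ta + cay_vdist G S a b + tb | a ta b tb. (a, ta) \<in> P \<and> (b, tb) \<in> P'} \<union>
     {\<bar>t - u\<bar> | g h t u. g \<noteq> h \<and> P = {(g, t), (h, 1 - t)} \<and> P' = {(g, u), (h, 1 - u)}}"

lemma cay_dist_eq_Inf_candidates: "cay_dist G S P P' = Inf (cay_dist_candidates G S P P')"
  unfolding cay_dist_def cay_dist_candidates_def ..

lemma cay_vertex_inject: "cay_vertex a = cay_vertex b \<longleftrightarrow> a = b"
  unfolding cay_vertex_def by auto

lemma cay_base_eq: "cay_base G = cay_vertex \<one>\<^bsub>G\<^esub>"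
  unfolding cay_base_def cay_vertex_def ..

lemma cay_translate_vertex: "cay_translate G x (cay_vertex g) = cay_vertex (x \<otimes>\<^bsub>G\<^esub> g)"
  unfolding cay_translate_def cay_vertex_def by simp

lemma cay_translate_edge_point:
  "cay_translate G x (cay_edge_point g h t) = cay_edge_point (x \<otimes>\<^bsub>G\<^esub> g) (x \<otimes>\<^bsub>G\<^esub> h) t"
  unfolding cay_translate_def cay_edge_point_def by simp

lemma cay_adj_carrier: "(g, h) \<in> cay_adj G S \<Longrightarrow> g \<in> carrier G \<and> h \<in> carrier G"
  unfolding cay_adj_def by auto

lemma cay_adj_neq: "(g, h) \<in> cay_adj G S \<Longrightarrow> g \<noteq> h"
  unfolding cay_adj_def by auto

lemma cay_vdist_refl: "cay_vdist G S a a = 0"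
  unfolding cay_vdist_def by (simp add: Least_eq_0)

lemma cay_vdist_of_nat:
  obtains n where "cay_vdist G S a b = real n"
  unfolding cay_vdist_def by blast

lemma real_of_nat_plus_frac_neq:
  assumes "0 < t" and "t < 1"
  shows "real m + t \<noteq> real k"
proof
  assume eq: "real m + t = real k"
  then have "m < k" using assms by linarith
  then show False using eq assms by linarith
qed

lemma cay_points_cases:
  assumes "P \<in> cay_points G S"
  obtains (vertex) g where "g \<in> carrier G" and "P = cay_vertex g"
    | (edge) g h t where "(g, h) \<in> cay_adj G S" and "0 < t" and "t < 1" and "P = cay_edge_point g h t"
  using assms unfolding cay_points_def cay_vertex_def cay_edge_point_def by blast

lemma cay_points_subset: "P \<in> cay_points G S \<Longrightarrow> P \<subseteq> carrier G \<times> UNIV"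
  by (elim cay_points_cases) (auto simp: cay_vertex_def cay_edge_point_def dest: cay_adj_carrier)

lemma Inf_doubleton_real: "Inf {x::real, y} = min x y"
  using cInf_insert[of "{y}" x] by (simp add: inf_min)

lemma cay_dist_vertex_vertex: "cay_dist G S (cay_vertex a) (cay_vertex b) = cay_vdist G S a b"
proof -
  have "cay_dist_candidates G S (cay_vertex a) (cay_vertex b) = {cay_vdist G S a b}"
    unfolding cay_dist_candidates_def cay_vertex_def by auto
  then show ?thesis by (simp add: cay_dist_eq_Inf_candidates)
qed

lemma cay_dist_vertex_edge_point:
  assumes "g \<noteq> h"
  shows "cay_dist G S (cay_vertex a) (cay_edge_point g h t) =
    min (cay_vdist G S a g + t) (cay_vdist G S a h + (1 - t))"
proof -
  have "cay_dist_candidates G S (cay_vertex a) (cay_edge_point g h t) =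
      {cay_vdist G S a g + t, cay_vdist G S a h + (1 - t)}"
    unfolding cay_dist_candidates_def cay_vertex_def cay_edge_point_def by auto
  then show ?thesis by (simp add: cay_dist_eq_Inf_candidates Inf_doubleton_real)
qed

lemma cay_dist_edge_point_vertex:
  assumes "g \<noteq> h"
  shows "cay_dist G S (cay_edge_point g h t) (cay_vertex b) =
    min (t + cay_vdist G S g b) ((1 - t) + cay_vdist G S h b)"
proof -
  have "cay_dist_candidates G S (cay_edge_point g h t) (cay_vertex b) =
      {t + cay_vdist G S g b, (1 - t) + cay_vdist G S h b}"
    unfolding cay_dist_candidates_def cay_vertex_def cay_edge_point_def by auto
  then show ?thesis by (simp add: cay_dist_eq_Inf_candidates Inf_doubleton_real)
qed

locale cayley_graph = group G for G :: "('a, 'b) monoid_scheme" (structure) +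
  fixes S :: "'a set"
  assumes S_carrier: "S \<subseteq> carrier G"

locale connected_cayley_graph = cayley_graph +
  assumes S_generates: "generate G S = carrier G"

context cayley_graph
begin

lemma cay_adj_translate:
  assumes x: "x \<in> carrier G" and gh: "(g, h) \<in> cay_adj G S"
  shows "(x \<otimes> g, x \<otimes> h) \<in> cay_adj G S"
proof -
  from gh obtain s where g: "g \<in> carrier G" and h: "h \<in> carrier G" and "g \<noteq> h"
    and s: "s \<in> S" and step: "h = g \<otimes> s \<or> g = h \<otimes> s"
    unfolding cay_adj_def by auto
  have "x \<otimes> g \<noteq> x \<otimes> h" using \<open>g \<noteq> h\<close> x g h by simp
  moreover have "x \<otimes> h = (x \<otimes> g) \<otimes> s \<or> x \<otimes> g = (x \<otimes> h) \<otimes> s"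
    using step x g h s S_carrier by (auto simp: m_assoc)
  ultimately show ?thesis using s x g h unfolding cay_adj_def by auto
qed

lemma cay_adj_relpow_translate:
  assumes "x \<in> carrier G"
  shows "(g, h) \<in> cay_adj G S ^^ n \<Longrightarrow> (x \<otimes> g, x \<otimes> h) \<in> cay_adj G S ^^ n"
proof (induction n arbitrary: h)
  case (Suc n)
  then obtain b where "(g, b) \<in> cay_adj G S ^^ n" and "(b, h) \<in> cay_adj G S" by auto
  then show ?case using Suc.IH cay_adj_translate[OF assms] by auto
qed simp

lemma cay_vdist_translate:
  assumes x: "x \<in> carrier G" and g: "g \<in> carrier G" and h: "h \<in> carrier G"
  shows "cay_vdist G S (x \<otimes> g) (x \<otimes> h) = cay_vdist G S g h"
proof -
  have "(x \<otimes> g, x \<otimes> h) \<in> cay_adj G S ^^ n \<longleftrightarrow> (g, h) \<in> cay_adj G S ^^ n" for n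
  proof
    assume "(x \<otimes> g, x \<otimes> h) \<in> cay_adj G S ^^ n"
    then have "(inv x \<otimes> (x \<otimes> g), inv x \<otimes> (x \<otimes> h)) \<in> cay_adj G S ^^ n"
      using cay_adj_relpow_translate[of "inv x"] x by auto
    then show "(g, h) \<in> cay_adj G S ^^ n" using x g h by (simp add: m_assoc[symmetric])
  qed (rule cay_adj_relpow_translate[OF x])
  then show ?thesis unfolding cay_vdist_def by simp
qed

lemma cay_translate_points:
  assumes x: "x \<in> carrier G" and P: "P \<in> cay_points G S"
  shows "cay_translate G x P \<in> cay_points G S"
  using P
proof (cases rule: cay_points_cases)
  case (vertex g)
  then have "cay_translate G x P = cay_vertex (x \<otimes> g)" by (simp add: cay_translate_vertex)
  then show ?thesis using x vertex unfolding cay_points_def cay_vertex_def by auto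
next
  case (edge g h t)
  then have "cay_translate G x P = cay_edge_point (x \<otimes> g) (x \<otimes> h) t"
    by (simp add: cay_translate_edge_point)
  moreover have "(x \<otimes> g, x \<otimes> h) \<in> cay_adj G S" using edge cay_adj_translate[OF x] by blast
  ultimately show ?thesis using edge unfolding cay_points_def cay_edge_point_def by blast
qed

lemma cay_translate_inv:
  assumes x: "x \<in> carrier G" and P: "P \<in> cay_points G S"
  shows "cay_translate G (inv x) (cay_translate G x P) = P"
proof -
  have "cay_translate G (inv x) (cay_translate G x P) = (\<lambda>(g, t). (inv x \<otimes> (x \<otimes> g), t)) ` P"
    unfolding cay_translate_def image_image by (simp add: case_prod_beta)
  also have "\<dots> = (\<lambda>p. p) ` P"
    using cay_points_subset[OF P] x by (intro image_cong) (auto simp: m_assoc[symmetric])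
  finally show ?thesis by simp
qed

lemma cay_dist_candidates_translate_subset:
  assumes x: "x \<in> carrier G" and P: "P \<in> cay_points G S" and P': "P' \<in> cay_points G S"
  shows "cay_dist_candidates G S P P' \<subseteq>
    cay_dist_candidates G S (cay_translate G x P) (cay_translate G x P')"
proof
  fix z assume "z \<in> cay_dist_candidates G S P P'"
  then consider (through_vertices) a ta b tb
      where "z = ta + cay_vdist G S a b + tb" "(a, ta) \<in> P" "(b, tb) \<in> P'"
    | (same_edge) g h t u
      where "z = \<bar>t - u\<bar>" "g \<noteq> h" "P = {(g, t), (h, 1 - t)}" "P' = {(g, u), (h, 1 - u)}"
    unfolding cay_dist_candidates_def by blast
  then show "z \<in> cay_dist_candidates G S (cay_translate G x P) (cay_translate G x P')"
  proof cases
    case through_vertices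
    have "a \<in> carrier G" "b \<in> carrier G"
      using through_vertices cay_points_subset[OF P] cay_points_subset[OF P'] by auto
    then have "z = ta + cay_vdist G S (x \<otimes> a) (x \<otimes> b) + tb"
      using through_vertices cay_vdist_translate[OF x] by simp
    moreover have "(x \<otimes> a, ta) \<in> cay_translate G x P" "(x \<otimes> b, tb) \<in> cay_translate G x P'"
      using through_vertices unfolding cay_translate_def by force+
    ultimately show ?thesis unfolding cay_dist_candidates_def by blast
  next
    case same_edge
    have "g \<in> carrier G" "h \<in> carrier G" using same_edge cay_points_subset[OF P] by auto
    then have "x \<otimes> g \<noteq> x \<otimes> h" using same_edge x by simp
    moreover have "cay_translate G x P = {(x \<otimes> g, t), (x \<otimes> h, 1 - t)}"
      "cay_translate G x P' = {(x \<otimes> g, u), (x \<otimes> h, 1 - u)}"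
      using same_edge unfolding cay_translate_def by auto
    ultimately show ?thesis using same_edge unfolding cay_dist_candidates_def by blast
  qed
qed

lemma cay_dist_translate:
  assumes x: "x \<in> carrier G" and P: "P \<in> cay_points G S" and P': "P' \<in> cay_points G S"
  shows "cay_dist G S (cay_translate G x P) (cay_translate G x P') = cay_dist G S P P'"
proof -
  have "cay_dist_candidates G S (cay_translate G x P) (cay_translate G x P') \<subseteq>
      cay_dist_candidates G S (cay_translate G (inv x) (cay_translate G x P))
        (cay_translate G (inv x) (cay_translate G x P'))"
    using x P P' by (intro cay_dist_candidates_translate_subset cay_translate_points) auto
  also have "\<dots> = cay_dist_candidates G S P P'"
    using cay_translate_inv[OF x P] cay_translate_inv[OF x P'] by simp
  finally show ?thesis
    using cay_dist_candidates_translate_subset[OF x P P'] by (simp add: cay_dist_eq_Inf_candidates)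
qed

lemma cay_adj_rtrancl_generate:
  "y \<in> generate G S \<Longrightarrow> a \<in> carrier G \<Longrightarrow> (a, a \<otimes> y) \<in> (cay_adj G S)\<^sup>*"
proof (induction y arbitrary: a rule: generate.induct)
  case one
  then show ?case by simp
next
  case (incl s)
  then have "a = a \<otimes> s \<or> (a, a \<otimes> s) \<in> cay_adj G S"
    using S_carrier unfolding cay_adj_def by auto
  then show ?case by auto
next
  case (inv s)
  have "a = (a \<otimes> inv s) \<otimes> s" using inv S_carrier by (auto simp: m_assoc)
  then have "a = a \<otimes> inv s \<or> (a, a \<otimes> inv s) \<in> cay_adj G S"
    using inv S_carrier unfolding cay_adj_def by auto
  then show ?case by auto
next
  case (eng h1 h2)
  have "h1 \<in> carrier G" "h2 \<in> carrier G"
    using eng.hyps generate_in_carrier[OF S_carrier] by auto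
  then have "(a \<otimes> h1, a \<otimes> (h1 \<otimes> h2)) \<in> (cay_adj G S)\<^sup>*"
    using eng.IH(2)[of "a \<otimes> h1"] eng.prems by (simp add: m_assoc)
  then show ?case using eng.IH(1) eng.prems by (meson rtrancl_trans)
qed

end

context connected_cayley_graph
begin

lemma cay_adj_relpow_cay_vdist:
  assumes a: "a \<in> carrier G" and b: "b \<in> carrier G"
  obtains n where "cay_vdist G S a b = real n" and "(a, b) \<in> cay_adj G S ^^ n"
proof -
  have "inv a \<otimes> b \<in> generate G S" using S_generates a b by auto
  then have "(a, a \<otimes> (inv a \<otimes> b)) \<in> (cay_adj G S)\<^sup>*"
    using cay_adj_rtrancl_generate a by blast
  then have "(a, b) \<in> (cay_adj G S)\<^sup>*" using a b by (simp add: m_assoc[symmetric])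
  then obtain m where "(a, b) \<in> cay_adj G S ^^ m" by (auto simp: rtrancl_power)
  then have "(a, b) \<in> cay_adj G S ^^ (LEAST n. (a, b) \<in> cay_adj G S ^^ n)" by (rule LeastI)
  then show thesis using that unfolding cay_vdist_def by blast
qed

lemma cay_vdist_less_one:
  assumes "a \<in> carrier G" and "b \<in> carrier G" and "cay_vdist G S a b < 1"
  shows "a = b"
proof -
  obtain n where "cay_vdist G S a b = real n" and "(a, b) \<in> cay_adj G S ^^ n"
    using assms(1,2) by (rule cay_adj_relpow_cay_vdist)
  then show ?thesis using assms(3) by auto
qed

lemma cay_vdist_eq_one:
  assumes "a \<in> carrier G" and "b \<in> carrier G" and "cay_vdist G S a b = 1"
  shows "(a, b) \<in> cay_adj G S"
proof -
  obtain n where "cay_vdist G S a b = real n" and "(a, b) \<in> cay_adj G S ^^ n"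
    using assms(1,2) by (rule cay_adj_relpow_cay_vdist)
  then show ?thesis using assms(3) by auto
qed

lemma cay_vdist_plus_frac:
  assumes "a \<in> carrier G" and "g \<in> carrier G" and "cay_vdist G S a g + t = u"
    and "0 < t" and "u < 1"
  shows "a = g \<and> t = u"
proof -
  have "a = g" using assms by (intro cay_vdist_less_one) auto
  then show ?thesis using assms(3) by (simp add: cay_vdist_refl)
qed

lemma cay_dist_vertex_edge_point_frac:
  assumes gh: "(g, h) \<in> cay_adj G S" and t: "0 < t" "t < 1" and a: "a \<in> carrier G" and "u < 1"
    and dist: "cay_dist G S (cay_vertex a) (cay_edge_point g h t) = u"
  shows "(a = g \<and> t = u) \<or> (a = h \<and> t = 1 - u)"
proof -
  have g: "g \<in> carrier G" and h: "h \<in> carrier G" using cay_adj_carrier[OF gh] by auto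
  have "u = min (cay_vdist G S a g + t) (cay_vdist G S a h + (1 - t))"
    using dist unfolding cay_dist_vertex_edge_point[OF cay_adj_neq[OF gh]] by simp
  then have "cay_vdist G S a g + t = u \<or> cay_vdist G S a h + (1 - t) = u"
    by (auto simp: min_def split: if_splits)
  then show ?thesis
  proof
    assume "cay_vdist G S a g + t = u"
    then show ?thesis using cay_vdist_plus_frac[OF a g] t \<open>u < 1\<close> by blast
  next
    assume "cay_vdist G S a h + (1 - t) = u"
    then show ?thesis using cay_vdist_plus_frac[OF a h, of "1 - t" u] t \<open>u < 1\<close> by auto
  qed
qed

lemma cay_dist_edge_point_vertex_frac:
  assumes gh: "(g, h) \<in> cay_adj G S" and t: "0 < t" "t < 1" and b: "b \<in> carrier G" and "u < 1"
    and dist: "cay_dist G S (cay_edge_point g h t) (cay_vertex b) = u"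
  shows "(b = g \<and> t = u) \<or> (b = h \<and> t = 1 - u)"
proof -
  have g: "g \<in> carrier G" and h: "h \<in> carrier G" using cay_adj_carrier[OF gh] by auto
  have "u = min (t + cay_vdist G S g b) ((1 - t) + cay_vdist G S h b)"
    using dist unfolding cay_dist_edge_point_vertex[OF cay_adj_neq[OF gh]] by simp
  then have "cay_vdist G S g b + t = u \<or> cay_vdist G S h b + (1 - t) = u"
    by (auto simp: min_def split: if_splits)
  then show ?thesis
  proof
    assume "cay_vdist G S g b + t = u"
    then show ?thesis using cay_vdist_plus_frac[OF g b] t \<open>u < 1\<close> by blast
  next
    assume "cay_vdist G S h b + (1 - t) = u"
    then show ?thesis using cay_vdist_plus_frac[OF h b, of "1 - t" u] t \<open>u < 1\<close> by auto
  qed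
qed

end

section \<open>Geodesic rays in the Cayley graph\<close>

abbreviation cay_geodesic_ray :: "('a, 'b) monoid_scheme \<Rightarrow> 'a set \<Rightarrow> (real \<Rightarrow> ('a \<times> real) set) \<Rightarrow> bool" where
  "cay_geodesic_ray G S \<gamma> \<equiv> geodesic_ray (cay_points G S) (cay_dist G S) (cay_base G) \<gamma>"

text \<open>\<open>THE\<close> is only meaningful where \<open>\<gamma>\<close> passes through a vertex at integer times, as geodesic
  rays from the identity do.\<close>

definition ray_vertex :: "(real \<Rightarrow> ('a \<times> real) set) \<Rightarrow> nat \<Rightarrow> 'a" where
  "ray_vertex \<gamma> k = (THE v. \<gamma> (real k) = cay_vertex v)"

context connected_cayley_graph
begin

lemma geodesic_ray_at_nat_vertex:
  assumes ray: "cay_geodesic_ray G S \<gamma>"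
  shows "\<exists>v\<in>carrier G. \<gamma> (real k) = cay_vertex v"
proof -
  have P: "\<gamma> (real k) \<in> cay_points G S"
    and dist: "cay_dist G S (cay_vertex \<one>) (\<gamma> (real k)) = real k"
    using ray unfolding geodesic_ray_def cay_base_eq by (auto dest: spec[of _ 0])
  from P show ?thesis
  proof (cases rule: cay_points_cases)
    case (edge g h t)
    obtain m m' where "cay_vdist G S \<one> g = real m" "cay_vdist G S \<one> h = real m'"
      by (meson cay_vdist_of_nat)
    moreover have "real k = min (cay_vdist G S \<one> g + t) (cay_vdist G S \<one> h + (1 - t))"
      using dist unfolding edge(4) cay_dist_vertex_edge_point[OF cay_adj_neq[OF edge(1)]] by simp
    ultimately have "real m + t = real k \<or> real m' + (1 - t) = real k"
      by (auto simp: min_def split: if_splits)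
    then show ?thesis
      using real_of_nat_plus_frac_neq[of t m k] real_of_nat_plus_frac_neq[of "1 - t" m' k] edge
      by auto
  qed blast
qed

lemma geodesic_ray_vertex:
  assumes "cay_geodesic_ray G S \<gamma>"
  shows "\<gamma> (real k) = cay_vertex (ray_vertex \<gamma> k)" and "ray_vertex \<gamma> k \<in> carrier G"
proof -
  obtain v where "v \<in> carrier G" "\<gamma> (real k) = cay_vertex v"
    using geodesic_ray_at_nat_vertex[OF assms] by blast
  moreover have "ray_vertex \<gamma> k = v"
    unfolding ray_vertex_def using calculation cay_vertex_inject by (metis (mono_tags) the_equality)
  ultimately show "\<gamma> (real k) = cay_vertex (ray_vertex \<gamma> k)" "ray_vertex \<gamma> k \<in> carrier G" by auto
qed

lemma ray_vertex_adj:
  assumes ray: "cay_geodesic_ray G S \<gamma>"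
  shows "(ray_vertex \<gamma> k, ray_vertex \<gamma> (Suc k)) \<in> cay_adj G S"
proof -
  have "cay_dist G S (\<gamma> (real k)) (\<gamma> (real (Suc k))) = 1"
    using ray unfolding geodesic_ray_def by auto
  then have "cay_vdist G S (ray_vertex \<gamma> k) (ray_vertex \<gamma> (Suc k)) = 1"
    using geodesic_ray_vertex(1)[OF ray, of k] geodesic_ray_vertex(1)[OF ray, of "Suc k"]
    by (metis cay_dist_vertex_vertex)
  then show ?thesis by (intro cay_vdist_eq_one geodesic_ray_vertex(2)[OF ray])
qed

lemma geodesic_ray_between_vertices:
  assumes ray: "cay_geodesic_ray G S \<gamma>" and u: "0 < u" "u < 1"
  shows "\<gamma> (real k + u) = cay_edge_point (ray_vertex \<gamma> k) (ray_vertex \<gamma> (Suc k)) u"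
proof -
  define a b where "a = ray_vertex \<gamma> k" and "b = ray_vertex \<gamma> (Suc k)"
  have a: "\<gamma> (real k) = cay_vertex a" "a \<in> carrier G"
    and b: "\<gamma> (real k + 1) = cay_vertex b" "b \<in> carrier G"
    unfolding a_def b_def using geodesic_ray_vertex[OF ray, of k] geodesic_ray_vertex[OF ray, of "Suc k"]
    by (simp_all add: add.commute)
  have "a \<noteq> b" unfolding a_def b_def using ray_vertex_adj[OF ray] by (rule cay_adj_neq)
  have dist: "cay_dist G S (\<gamma> s) (\<gamma> t) = \<bar>s - t\<bar>" if "s \<ge> 0" "t \<ge> 0" for s t
    using ray that unfolding geodesic_ray_def by blast
  have P: "\<gamma> (real k + u) \<in> cay_points G S"
    using ray u unfolding geodesic_ray_def by auto
  have dist_a: "cay_dist G S (cay_vertex a) (\<gamma> (real k + u)) = u"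
    using dist[of "real k" "real k + u"] a u by simp
  have dist_b: "cay_dist G S (\<gamma> (real k + u)) (cay_vertex b) = 1 - u"
    using dist[of "real k + u" "real k + 1"] b u by simp
  from P show ?thesis
  proof (cases rule: cay_points_cases)
    case (vertex w)
    obtain m where "cay_vdist G S a w = real m" by (rule cay_vdist_of_nat)
    then show ?thesis
      using dist_a vertex u real_of_nat_plus_frac_neq[of u 0 m] by (simp add: cay_dist_vertex_vertex)
  next
    case (edge g h t)
    have "(a = g \<and> t = u) \<or> (a = h \<and> t = 1 - u)"
      using edge a u dist_a by (intro cay_dist_vertex_edge_point_frac) auto
    moreover have "(b = g \<and> t = 1 - u) \<or> (b = h \<and> t = 1 - (1 - u))"
      using edge b u dist_b by (intro cay_dist_edge_point_vertex_frac) auto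
    ultimately consider "a = g" "b = h" "t = u" | "a = h" "b = g" "t = 1 - u"
      using \<open>a \<noteq> b\<close> by force
    then show ?thesis
      by cases (auto simp: edge(4) a_def[symmetric] b_def[symmetric] cay_edge_point_def)
  qed
qed

end

section \<open>Windows of geodesic rays\<close>

definition ray_step :: "('a, 'b) monoid_scheme \<Rightarrow> (real \<Rightarrow> ('a \<times> real) set) \<Rightarrow> nat \<Rightarrow> 'a" where
  "ray_step G \<gamma> k = inv\<^bsub>G\<^esub> ray_vertex \<gamma> k \<otimes>\<^bsub>G\<^esub> ray_vertex \<gamma> (Suc k)"

definition ray_window :: "('a, 'b) monoid_scheme \<Rightarrow> (real \<Rightarrow> ('a \<times> real) set) \<Rightarrow> nat \<Rightarrow> nat \<Rightarrow> 'a list" where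
  "ray_window G \<gamma> n N = map (\<lambda>i. ray_step G \<gamma> (n + i)) [0..<N]"

definition morse_windows :: "('a, 'b) monoid_scheme \<Rightarrow> 'a set \<Rightarrow> (real \<Rightarrow> real) \<Rightarrow> nat \<Rightarrow> 'a list set" where
  "morse_windows G S M N = {ray_window G \<gamma> n N | \<gamma> n.
     cay_geodesic_ray G S \<gamma> \<and> is_morse (cay_points G S) (cay_dist G S) M \<gamma> {0..}}"

context connected_cayley_graph
begin

lemma ray_step_mem:
  assumes ray: "cay_geodesic_ray G S \<gamma>"
  shows "ray_step G \<gamma> k \<in> S \<union> (\<lambda>s. inv s) ` S"
proof -
  obtain s where s: "s \<in> S" and step: "ray_vertex \<gamma> (Suc k) = ray_vertex \<gamma> k \<otimes> s \<or>
      ray_vertex \<gamma> k = ray_vertex \<gamma> (Suc k) \<otimes> s"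
    using ray_vertex_adj[OF ray, of k] unfolding cay_adj_def by auto
  have "s \<in> carrier G" using s S_carrier by auto
  have a: "ray_vertex \<gamma> k \<in> carrier G" and b: "ray_vertex \<gamma> (Suc k) \<in> carrier G"
    using geodesic_ray_vertex(2)[OF ray] by auto
  from step show ?thesis
  proof
    assume "ray_vertex \<gamma> (Suc k) = ray_vertex \<gamma> k \<otimes> s"
    then have "ray_step G \<gamma> k = s"
      unfolding ray_step_def using a \<open>s \<in> carrier G\<close> by (simp add: m_assoc[symmetric])
    then show ?thesis using s by auto
  next
    assume "ray_vertex \<gamma> k = ray_vertex \<gamma> (Suc k) \<otimes> s"
    then have "ray_step G \<gamma> k = inv s"
      unfolding ray_step_def using b \<open>s \<in> carrier G\<close> by (simp add: inv_mult_group m_assoc)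
    then show ?thesis using s by auto
  qed
qed

lemma morse_windows_subset_words:
  "morse_windows G S M N \<subseteq> {xs. set xs \<subseteq> S \<union> (\<lambda>s. inv s) ` S \<and> length xs = N}"
proof
  fix xs assume "xs \<in> morse_windows G S M N"
  then obtain \<gamma> n where ray: "cay_geodesic_ray G S \<gamma>" and xs: "xs = ray_window G \<gamma> n N"
    unfolding morse_windows_def by blast
  show "xs \<in> {xs. set xs \<subseteq> S \<union> (\<lambda>s. inv s) ` S \<and> length xs = N}"
    unfolding xs ray_window_def using ray_step_mem[OF ray] by (simp add: image_subset_iff)
qed

lemma countable_morse_window_types:
  assumes "finite S"
  shows "countable ((\<lambda>M. (N M, morse_windows G S M (N M))) ` A)"
proof (rule countable_subset)
  show "(\<lambda>M. (N M, morse_windows G S M (N M))) ` A \<subseteq>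
      {(N, W) | N W. W \<subseteq> {xs. set xs \<subseteq> S \<union> (\<lambda>s. inv s) ` S \<and> length xs = N}}"
    using morse_windows_subset_words by blast
  show "countable {(N, W) | N W. W \<subseteq> {xs. set xs \<subseteq> S \<union> (\<lambda>s. inv s) ` S \<and> length xs = N}}"
    by (rule countable_length_indexed_word_sets) (simp add: assms)
qed

lemma ray_vertex_window_translate:
  assumes ray: "cay_geodesic_ray G S \<gamma>" and ray': "cay_geodesic_ray G S \<gamma>'"
    and same: "ray_window G \<gamma> n N = ray_window G \<gamma>' n' N"
  shows "i \<le> N \<Longrightarrow>
    ray_vertex \<gamma> (n + i) = (ray_vertex \<gamma> n \<otimes> inv (ray_vertex \<gamma>' n')) \<otimes> ray_vertex \<gamma>' (n' + i)"
proof (induction i)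
  case 0
  show ?case using geodesic_ray_vertex(2)[OF ray] geodesic_ray_vertex(2)[OF ray'] by (simp add: m_assoc)
next
  case (Suc i)
  have carrier: "ray_vertex \<gamma> m \<in> carrier G" "ray_vertex \<gamma>' m \<in> carrier G" for m
    using geodesic_ray_vertex(2)[OF ray] geodesic_ray_vertex(2)[OF ray'] by auto
  have step_carrier: "ray_step G \<gamma>' m \<in> carrier G" for m
    unfolding ray_step_def using carrier by simp
  have next_vertex: "ray_vertex \<beta> (Suc m) = ray_vertex \<beta> m \<otimes> ray_step G \<beta> m"
    if "\<beta> = \<gamma> \<or> \<beta> = \<gamma>'" for \<beta> m
    unfolding ray_step_def using that carrier by (auto simp: m_assoc[symmetric])
  have "ray_step G \<gamma> (n + i) = ray_step G \<gamma>' (n' + i)"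
    using arg_cong[OF same, of "\<lambda>xs. xs ! i"] Suc.prems unfolding ray_window_def by simp
  then show ?case
    using Suc next_vertex[of \<gamma> "n + i"] next_vertex[of \<gamma>' "n' + i"] carrier step_carrier
    by (simp add: m_assoc)
qed

lemma geodesic_ray_window_translate:
  assumes ray: "cay_geodesic_ray G S \<gamma>" and ray': "cay_geodesic_ray G S \<gamma>'"
    and same: "ray_window G \<gamma> n N = ray_window G \<gamma>' n' N" and r: "r \<in> {0..real N}"
  shows "\<gamma> (real n + r) =
    cay_translate G (ray_vertex \<gamma> n \<otimes> inv (ray_vertex \<gamma>' n')) (\<gamma>' (real n' + r))"
proof -
  define x where "x = ray_vertex \<gamma> n \<otimes> inv (ray_vertex \<gamma>' n')"
  define i where "i = nat \<lfloor>r\<rfloor>"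
  define u where "u = r - real i"
  have i: "real i \<le> r" "r < real i + 1"
    unfolding i_def using r of_int_floor_le[of r] real_of_int_floor_add_one_gt[of r] by auto
  then have "i \<le> N" using r by auto
  have vertex: "ray_vertex \<gamma> (n + j) = x \<otimes> ray_vertex \<gamma>' (n' + j)" if "j \<le> N" for j
    using ray_vertex_window_translate[OF ray ray' same that] unfolding x_def .
  show ?thesis
  proof (cases "u = 0")
    case True
    then have "r = real i" unfolding u_def by simp
    then show ?thesis
      using geodesic_ray_vertex(1)[OF ray, of "n + i"] geodesic_ray_vertex(1)[OF ray', of "n' + i"]
        vertex[OF \<open>i \<le> N\<close>]
      by (simp add: x_def cay_translate_vertex)
  next
    case False
    then have u: "0 < u" "u < 1" using i unfolding u_def by auto
    then have "i < N" using i r unfolding u_def by auto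
    have "\<gamma> (real n + r) = \<gamma> (real (n + i) + u)" unfolding u_def by simp
    also have "\<dots> = cay_edge_point (ray_vertex \<gamma> (n + i)) (ray_vertex \<gamma> (Suc (n + i))) u"
      by (rule geodesic_ray_between_vertices[OF ray u])
    also have "\<dots> = cay_translate G x
        (cay_edge_point (ray_vertex \<gamma>' (n' + i)) (ray_vertex \<gamma>' (Suc (n' + i))) u)"
      using vertex[of i] vertex[of "Suc i"] \<open>i < N\<close> by (simp add: cay_translate_edge_point)
    also have "\<dots> = cay_translate G x (\<gamma>' (real (n' + i) + u))"
      by (simp only: geodesic_ray_between_vertices[OF ray' u])
    finally show ?thesis unfolding x_def u_def by simp
  qed
qed

lemma is_morse_window_translate:
  assumes ray: "cay_geodesic_ray G S \<gamma>" and ray': "cay_geodesic_ray G S \<gamma>'"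
    and same: "ray_window G \<gamma> n N = ray_window G \<gamma>' n' N"
    and morse': "is_morse (cay_points G S) (cay_dist G S) M \<gamma>' {real n'..real n' + real N}"
  shows "is_morse (cay_points G S) (cay_dist G S) M \<gamma> {real n..real n + real N}"
proof -
  define x where "x = ray_vertex \<gamma> n \<otimes> inv (ray_vertex \<gamma>' n')"
  define c where "c = real n' - real n"
  have x: "x \<in> carrier G" "inv x \<in> carrier G"
    unfolding x_def using geodesic_ray_vertex(2)[OF ray] geodesic_ray_vertex(2)[OF ray'] by auto
  have shift: "real n + c = real n'" "real n + real N + c = real n' + real N"
    unfolding c_def by simp_all
  have morse_shifted: "is_morse (cay_points G S) (cay_dist G S) M \<gamma>' {real n + c..real n + real N + c}"
    unfolding shift by (rule morse')
  have points: "\<gamma>' ` {real n + c..real n + real N + c} \<subseteq> cay_points G S"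
    using ray' unfolding geodesic_ray_def c_def by auto
  have translate: "\<gamma> u = cay_translate G x (\<gamma>' (u + c))" if "u \<in> {real n..real n + real N}" for u
    using geodesic_ray_window_translate[OF ray ray' same, of "u - real n"] that
    unfolding x_def c_def by (simp add: algebra_simps)
  have qg: "quasi_geodesic (cay_points G S) (cay_dist G S) 1 \<gamma> {real n..real n + real N}"
    by (rule geodesic_ray_quasi_geodesic[OF ray]) auto
  have maps: "cay_translate G y ` cay_points G S \<subseteq> cay_points G S" if "y \<in> carrier G" for y
    using cay_translate_points[OF that] by blast
  have inverse: "cay_translate G (inv x) (cay_translate G x P) = P"
    "cay_translate G x (cay_translate G (inv x) P) = P" if "P \<in> cay_points G S" for P
    using cay_translate_inv[OF x(1) that] cay_translate_inv[OF x(2) that]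
      x(1) by simp_all
  show ?thesis
    by (rule is_morse_isometric_shift[OF morse_shifted points maps[OF x(1)]
          cay_dist_translate[OF x(1)] maps[OF x(2)]
          cay_dist_translate[OF x(2)] inverse translate qg])
qed

lemma geodesic_ray_locally_morse:
  assumes ray: "cay_geodesic_ray G S \<gamma>"
    and windows: "\<And>n. ray_window G \<gamma> n N \<in> morse_windows G S M N" and N: "L + 1 \<le> real N"
  shows "locally_morse_qg (cay_points G S) (cay_dist G S) L M 1 \<gamma> {0..}"
  unfolding locally_morse_qg_def
proof (intro conjI ballI allI impI)
  show "mpath (cay_points G S) (cay_dist G S) \<gamma> {0..}"
    using geodesic_ray_quasi_geodesic[OF ray, of "{0..}"] unfolding quasi_geodesic_def
    by (auto simp: is_interval_ci)
next
  fix s t :: real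
  assume "s \<in> {0..}" and st: "s \<le> t \<and> t - s \<le> L"
  show qg: "quasi_geodesic (cay_points G S) (cay_dist G S) 1 \<gamma> {s..t}"
    using geodesic_ray_quasi_geodesic[OF ray, of "{s..t}"] \<open>s \<in> {0..}\<close> st
    by (auto simp: is_interval_cc)
  define n where "n = nat \<lfloor>s\<rfloor>"
  have n: "real n \<le> s" "s < real n + 1"
    unfolding n_def using \<open>s \<in> {0..}\<close> of_int_floor_le[of s] real_of_int_floor_add_one_gt[of s] by auto
  obtain \<gamma>' n' where ray': "cay_geodesic_ray G S \<gamma>'"
    and morse': "is_morse (cay_points G S) (cay_dist G S) M \<gamma>' {0..}"
    and same: "ray_window G \<gamma> n N = ray_window G \<gamma>' n' N"
    using windows[of n] unfolding morse_windows_def by auto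
  have "is_morse (cay_points G S) (cay_dist G S) M \<gamma>' {real n'..real n' + real N}"
    by (rule is_morse_subinterval[OF morse' _ geodesic_ray_quasi_geodesic[OF ray']]) auto
  then have "is_morse (cay_points G S) (cay_dist G S) M \<gamma> {real n..real n + real N}"
    by (rule is_morse_window_translate[OF ray ray' same])
  moreover have "{s..t} \<subseteq> {real n..real n + real N}" using n st N by auto
  ultimately show "is_morse (cay_points G S) (cay_dist G S) M \<gamma> {s..t}"
    using is_morse_subinterval qg by blast
qed

lemma morse_stratum_subset_if_windows:
  assumes local_to_global: "\<And>p I. locally_morse_qg (cay_points G S) (cay_dist G S) L M0 1 p I \<Longrightarrow>
      is_morse (cay_points G S) (cay_dist G S) M' p I"
    and N: "L + 1 \<le> real N" and windows: "morse_windows G S M N \<subseteq> morse_windows G S M0 N"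
  shows "morse_stratum (cay_points G S) (cay_dist G S) (cay_base G) M \<subseteq>
    morse_stratum (cay_points G S) (cay_dist G S) (cay_base G) M'"
proof -
  have "is_morse (cay_points G S) (cay_dist G S) M' \<gamma> {0..}"
    if ray: "cay_geodesic_ray G S \<gamma>" and "is_morse (cay_points G S) (cay_dist G S) M \<gamma> {0..}" for \<gamma>
  proof -
    have "ray_window G \<gamma> n N \<in> morse_windows G S M0 N" for n
      using that windows unfolding morse_windows_def by blast
    then show ?thesis using local_to_global geodesic_ray_locally_morse[OF ray _ N] by blast
  qed
  then show ?thesis unfolding morse_stratum_def by blast
qed

end

theorem theorem4p3:
  fixes G :: "('a, 'b) monoid_scheme" and S :: "'a set"
  assumes "group G"
    and "finite S" and "S \<subseteq> carrier G" and "generate G S = carrier G"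
    and "MLTG (cay_points G S) (cay_dist G S)"
  shows "strongly_sigma_compact (cay_points G S) (cay_dist G S) (cay_base G)"
proof -
  interpret connected_cayley_graph G S
    using assms by (simp add: connected_cayley_graph_def connected_cayley_graph_axioms_def
      cayley_graph_def cayley_graph_axioms_def)
  obtain L M' where M': "\<And>M. morse_gauge M \<Longrightarrow> morse_gauge (M' M)"
    and local_to_global: "\<And>M p I. morse_gauge M \<Longrightarrow>
      locally_morse_qg (cay_points G S) (cay_dist G S) (L M) M 1 p I \<Longrightarrow>
      is_morse (cay_points G S) (cay_dist G S) (M' M) p I"
    using MLTG_geodesic_scale_gauge[OF assms(5)] by metis
  define N where "N M = nat \<lceil>L M\<rceil> + 1" for M
  show ?thesis
  proof (rule strongly_sigma_compact_if_countable_types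
      [where \<tau> = "\<lambda>M. (N M, morse_windows G S M (N M))" and F = M'])
    show "countable ((\<lambda>M. (N M, morse_windows G S M (N M))) ` {M. morse_gauge M})"
      using assms(2) by (rule countable_morse_window_types)
    show "morse_gauge (M' M)" if "morse_gauge M" for M
      using that by (rule M')
  next
    fix M M0
    assume "morse_gauge M" and "morse_gauge M0"
      and "(N M, morse_windows G S M (N M)) = (N M0, morse_windows G S M0 (N M0))"
    then have "morse_windows G S M (N M0) \<subseteq> morse_windows G S M0 (N M0)"
      by (metis order_refl prod.inject)
    moreover have "L M0 + 1 \<le> real (N M0)" unfolding N_def using real_nat_ceiling_ge by simp
    ultimately show "morse_stratum (cay_points G S) (cay_dist G S) (cay_base G) M \<subseteq>
        morse_stratum (cay_points G S) (cay_dist G S) (cay_base G) (M' M0)"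
      using morse_stratum_subset_if_windows[OF local_to_global[OF \<open>morse_gauge M0\<close>]] by blast
  qed
qed

end
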